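(* Let $p\ge 1$, $n_0,n_1\ge 1$, let $\bm{X}_0$ ($n_0\times p$) and $\bm{X}_1$ ($n_1\times p$) be fixed design matrices of full column rank, let $\sigma_0,\sigma_1>0$ be known, and let $0<a_0\le 1$. Suppose the historical responses satisfy $\bm{Y}_0\sim N_{n_0}(\bm{X}_0\bm{\beta}_0,\sigma_0^2\bm{I}_{n_0})$ and the current responses satisfy $\bm{Y}_1\sim N_{n_1}(\bm{X}_1\bm{\beta}_1,\sigma_1^2\bm{I}_{n_1})$, independently, where the parameters satisfy the scale-transformation relation $\bm{\beta}_0=(\sigma_0/\sigma_1)\bm{\beta}_1$. Define the straPP posterior mean and power-prior posterior mean $$\widehat{\bm{\beta}}_s=\bm{\Sigma}_s\Big\{\tfrac{1}{\sigma_1^2}\bm{X}_1^T\bm{Y}_1+\tfrac{a_0}{\sigma_0\sigma_1}\bm{X}_0^T\bm{Y}_0\Big\},\quad \bm{\Sigma}_s=\sigma_1^2(\bm{X}_1^T\bm{X}_1+a_0\bm{X}_0^T\bm{X}_0)^{-1},$$ $$\widehat{\bm{\beta}}_p=\bm{\Sigma}_p\Big\{\tfrac{1}{\sigma_1^2}\bm{X}_1^T\bm{Y}_1+\tfrac{a_0}{\sigma_0^2}\bm{X}_0^T\bm{Y}_0\Big\},\quad \bm{\Sigma}_p=\Big\{\tfrac{1}{\sigma_1^2}\bm{X}_1^T\bm{X}_1+\tfrac{a_0}{\sigma_0^2}\bm{X}_0^T\bm{X}_0\Big\}^{-1}.$$ For $j\in\{0,\dots,p-1\}$ let $\beta_{1j}$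 be the $(j+1)$th entry of $\bm{\beta}_1$ and $\hat\beta_{s,1j},\hat\beta_{p,1j}$ the $(j+1)$th entries of $\widehat{\bm{\beta}}_s,\widehat{\bm{\beta}}_p$. Assume $\beta_{1j}\neq 0$ and $\mathrm{Bias}(\hat\beta_{p,1j})\neq 0$. Then $$\frac{\mathrm{Var}(\hat\beta_{s,1j})-\mathrm{Var}(\hat\beta_{p,1j})}{\big[\mathrm{PercentBias}(\hat\beta_{p,1j})\big]^2}\le \beta_{1j}^2$$ implies $\mathrm{MSE}(\hat\beta_{s,1j})\le \mathrm{MSE}(\hat\beta_{p,1j})$.
   Context: All variances, biases and MSEs are frequentist, taken over the sampling distribution of $(\bm{Y}_0,\bm{Y}_1)$ with designs fixed: $\mathrm{Bias}(\hat\beta)=E(\hat\beta)-\beta_{1j}$, $\mathrm{MSE}=\mathrm{Var}+\mathrm{Bias}^2$, and $\mathrm{PercentBias}(\hat\beta_{p,1j})=\mathrm{Bias}(\hat\beta_{p,1j})/\beta_{1j}$. The two estimators are the posterior means of $\bm{\beta}_1$ under a uniform improper initial prior combined with, respectively, the scale transformed power prior $\bm{\beta}_1\sim N\big((\sigma_1/\sigma_0)(\bm{X}_0^T\bm{X}_0)^{-1}\bm{X}_0^T\bm{Y}_0,\ (\sigma_1^2/a_0)(\bm{X}_0^T\bm{X}_0)^{-1}\big)$ and the power prior $\bm{\beta}_1\sim N\big((\bm{X}_0^T\bm{X}_0)^{-1}\bm{X}_0^T\bm{Y}_0,\ (\sigma_0^2/a_0)(\bm{X}_0^T\bm{X}_0)^{-1}\big)$,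 with current-data likelihood $N(\bm{X}_1\bm{\beta}_1,\sigma_1^2\bm{I})$. *)

theory Defs
  imports "HOL-Analysis.Analysis" "HOL-Probability.Probability"
begin

definition bias :: "'a measure \<Rightarrow> ('a \<Rightarrow> real) \<Rightarrow> real \<Rightarrow> real" where
  "bias M T b = prob_space.expectation M T - b"

definition mse :: "'a measure \<Rightarrow> ('a \<Rightarrow> real) \<Rightarrow> real \<Rightarrow> real" where
  "mse M T b = prob_space.variance M T + (bias M T b)\<^sup>2"

definition percent_bias :: "'a measure \<Rightarrow> ('a \<Rightarrow> real) \<Rightarrow> real \<Rightarrow> real" where
  "percent_bias M T b = bias M T b / b"

definition Sigma_s :: "real^'p^'n1 \<Rightarrow> real^'p^'n0 \<Rightarrow> real \<Rightarrow> real \<Rightarrow> real^'p^'p" where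
  "Sigma_s X1 X0 s1 a0 =
     s1\<^sup>2 *\<^sub>R matrix_inv (transpose X1 ** X1 + a0 *\<^sub>R (transpose X0 ** X0))"

definition beta_s_hat ::
  "real^'p^'n1 \<Rightarrow> real^'p^'n0 \<Rightarrow> real \<Rightarrow> real \<Rightarrow> real \<Rightarrow> real^'n1 \<Rightarrow> real^'n0 \<Rightarrow> real^'p" where
  "beta_s_hat X1 X0 s1 s0 a0 y1 y0 =
     Sigma_s X1 X0 s1 a0 *v
       ((1 / s1\<^sup>2) *\<^sub>R (transpose X1 *v y1) + (a0 / (s0 * s1)) *\<^sub>R (transpose X0 *v y0))"

definition Sigma_p :: "real^'p^'n1 \<Rightarrow> real^'p^'n0 \<Rightarrow> real \<Rightarrow> real \<Rightarrow> real \<Rightarrow> real^'p^'p" where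
  "Sigma_p X1 X0 s1 s0 a0 =
     matrix_inv ((1 / s1\<^sup>2) *\<^sub>R (transpose X1 ** X1) + (a0 / s0\<^sup>2) *\<^sub>R (transpose X0 ** X0))"

definition beta_p_hat ::
  "real^'p^'n1 \<Rightarrow> real^'p^'n0 \<Rightarrow> real \<Rightarrow> real \<Rightarrow> real \<Rightarrow> real^'n1 \<Rightarrow> real^'n0 \<Rightarrow> real^'p" where
  "beta_p_hat X1 X0 s1 s0 a0 y1 y0 =
     Sigma_p X1 X0 s1 s0 a0 *v
       ((1 / s1\<^sup>2) *\<^sub>R (transpose X1 *v y1) + (a0 / s0\<^sup>2) *\<^sub>R (transpose X0 *v y0))"

end

theory Submission
  imports Defs
begin

text \<open>Under the scale-transformation relation the straPP posterior mean is an unbiased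
estimator of \<open>\<beta>\<^sub>1\<close>: it is linear in the data, and evaluated at the mean responses
\<open>X\<^sub>1 \<beta>\<^sub>1\<close> and \<open>X\<^sub>0 (\<sigma>\<^sub>0/\<sigma>\<^sub>1) \<beta>\<^sub>1\<close> it returns exactly \<open>\<beta>\<^sub>1\<close>, because both data terms
then contribute multiples of the same Gram matrix that \<open>\<Sigma>\<^sub>s\<close> inverts. So its MSE is its
variance, and the hypothesis, multiplied out, says that this variance is at most
the variance plus squared bias of the power-prior posterior mean.\<close>

lemma inner_gram_matrix_vector:
  fixes X :: "real^'n^'m"
  shows "x \<bullet> ((transpose X ** X) *v x) = (X *v x) \<bullet> (X *v x)"
  by (metis dot_lmul_matrix matrix_vector_mul_assoc transpose_matrix_vector inner_commute)

lemma invertible_gram_add: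
  fixes X1 :: "real^'p^'n1" and X0 :: "real^'p^'n0"
  assumes rank1: "rank X1 = CARD('p)" and a: "0 \<le> a"
  shows "invertible (transpose X1 ** X1 + a *\<^sub>R (transpose X0 ** X0))"
    (is "invertible ?G")
proof -
  have "x = 0" if "?G *v x = 0" for x
  proof -
    have "(X1 *v x) \<bullet> (X1 *v x) + a * ((X0 *v x) \<bullet> (X0 *v x)) = 0"
      using arg_cong[OF that, of "inner x"]
      by (simp add: matrix_vector_mult_add_rdistrib scaleR_matrix_vector_assoc[symmetric]
          inner_add_right inner_gram_matrix_vector del: transpose_matrix_vector)
    with a have "(X1 *v x) \<bullet> (X1 *v x) = 0"
      by (smt (verit) inner_ge_zero mult_nonneg_nonneg)
    then have "X1 *v x = X1 *v 0" by simp
    with rank1 show "x = 0" by (metis full_rank_injective injD)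
  qed
  then show ?thesis
    using matrix_left_invertible_ker invertible_left_inverse by blast
qed

lemma matrix_inv_left:
  fixes A :: "'a::field^'n^'n"
  assumes "invertible A"
  shows "matrix_inv A ** A = mat 1"
  using someI_ex[OF assms[unfolded invertible_def]] by (simp add: matrix_inv_def)

lemma beta_s_hat_at_means:
  fixes X1 :: "real^'p^'n1" and X0 :: "real^'p^'n0"
  assumes "rank X1 = CARD('p)" and "0 \<le> a0" and "s0 \<noteq> 0" and "s1 \<noteq> 0"
  shows "beta_s_hat X1 X0 s1 s0 a0 (X1 *v b) (X0 *v ((s0 / s1) *\<^sub>R b)) = b"
proof -
  define G where "G = transpose X1 ** X1 + a0 *\<^sub>R (transpose X0 ** X0)"
  have "(1 / s1\<^sup>2) *\<^sub>R (transpose X1 *v (X1 *v b))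
          + (a0 / (s0 * s1)) *\<^sub>R (transpose X0 *v (X0 *v ((s0 / s1) *\<^sub>R b)))
        = (1 / s1\<^sup>2) *\<^sub>R (G *v b)"
    using assms unfolding G_def
    by (simp add: matrix_vector_mult_add_rdistrib scaleR_matrix_vector_assoc[symmetric]
        matrix_vector_mult_scaleR matrix_vector_mul_assoc scaleR_right_distrib power2_eq_square
        del: transpose_matrix_vector)
  then have "beta_s_hat X1 X0 s1 s0 a0 (X1 *v b) (X0 *v ((s0 / s1) *\<^sub>R b))
        = matrix_inv G *v (G *v b)"
    using assms
    by (simp add: beta_s_hat_def Sigma_s_def G_def[symmetric] scaleR_matrix_vector_assoc[symmetric]
        matrix_vector_mult_scaleR del: transpose_matrix_vector)
  also have "\<dots> = (matrix_inv G ** G) *v b"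
    by (simp add: matrix_vector_mul_assoc del: transpose_matrix_vector)
  also have "\<dots> = b"
    using matrix_inv_left[OF invertible_gram_add[OF assms(1,2), of X0]] by (simp add: G_def)
  finally show ?thesis .
qed

lemma beta_s_hat_eq_linear:
  "beta_s_hat X1 X0 s1 s0 a0 y1 y0 =
     ((1 / s1\<^sup>2) *\<^sub>R (Sigma_s X1 X0 s1 a0 ** transpose X1)) *v y1
     + ((a0 / (s0 * s1)) *\<^sub>R (Sigma_s X1 X0 s1 a0 ** transpose X0)) *v y0"
  by (simp add: beta_s_hat_def matrix_vector_right_distrib matrix_vector_mult_scaleR
      scaleR_matrix_vector_assoc[symmetric] matrix_vector_mul_assoc del: transpose_matrix_vector)

context prob_space
begin

lemma normal_distributed_integrable:
  assumes "0 < \<sigma>" and "distributed M lborel X (normal_density \<mu> \<sigma>)"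
  shows "integrable M X"
  by (rule distributed_integrable_var[OF assms(2)])
    (auto simp: normal_density_nonneg intro: integrable_normal_moment_nz_1[OF assms(1)])

lemma expectation_matrix_vector_add:
  fixes Y1 :: "'a \<Rightarrow> real^'n1" and Y0 :: "'a \<Rightarrow> real^'n0"
  assumes "\<And>k. integrable M (\<lambda>\<omega>. Y1 \<omega> $ k)" and "\<And>k. integrable M (\<lambda>\<omega>. Y0 \<omega> $ k)"
  shows "expectation (\<lambda>\<omega>. (B1 *v Y1 \<omega> + B0 *v Y0 \<omega>) $ j)
    = (B1 *v (\<chi> k. expectation (\<lambda>\<omega>. Y1 \<omega> $ k)) + B0 *v (\<chi> k. expectation (\<lambda>\<omega>. Y0 \<omega> $ k))) $ j"
  using assms by (simp add: matrix_vector_mult_def)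

lemma expectation_beta_s_hat:
  assumes "\<And>k. integrable M (\<lambda>\<omega>. Y1 \<omega> $ k)" and "\<And>k. integrable M (\<lambda>\<omega>. Y0 \<omega> $ k)"
  shows "expectation (\<lambda>\<omega>. beta_s_hat X1 X0 s1 s0 a0 (Y1 \<omega>) (Y0 \<omega>) $ j)
    = beta_s_hat X1 X0 s1 s0 a0 (\<chi> k. expectation (\<lambda>\<omega>. Y1 \<omega> $ k)) (\<chi> k. expectation (\<lambda>\<omega>. Y0 \<omega> $ k)) $ j"
  unfolding beta_s_hat_eq_linear by (rule expectation_matrix_vector_add[OF assms])

end

lemma mse_le_mse_of_unbiased:
  assumes unbiased: "prob_space.expectation M T = b"
    and "b \<noteq> 0" and "bias M U b \<noteq> 0"
    and gap: "(prob_space.variance M T - prob_space.variance M U) / (percent_bias M U b)\<^sup>2 \<le> b\<^sup>2"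
  shows "mse M T b \<le> mse M U b"
proof -
  have "(percent_bias M U b)\<^sup>2 > 0"
    using assms(2,3) by (simp add: percent_bias_def)
  with gap have "prob_space.variance M T - prob_space.variance M U \<le> b\<^sup>2 * (percent_bias M U b)\<^sup>2"
    by (simp add: pos_divide_le_eq)
  also have "\<dots> = (bias M U b)\<^sup>2"
    using assms(2) by (simp add: percent_bias_def power_divide)
  finally show ?thesis
    using unbiased by (simp add: mse_def bias_def)
qed

theorem theorem1:
  fixes M :: "'a measure"
    and X0 :: "real^'p^'n0" and X1 :: "real^'p^'n1"
    and Y0 :: "'a \<Rightarrow> real^'n0" and Y1 :: "'a \<Rightarrow> real^'n1"
    and beta0 beta1 :: "real^'p"
    and s0 s1 a0 :: real
    and j :: 'p
  assumes M: "prob_space M"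
    and rank0: "rank X0 = CARD('p)" and rank1: "rank X1 = CARD('p)"
    and s0: "s0 > 0" and s1: "s1 > 0"
    and a0: "0 < a0" "a0 \<le> 1"
    and Y0_dist: "\<And>k. distributed M lborel (\<lambda>\<omega>. Y0 \<omega> $ k) (normal_density ((X0 *v beta0) $ k) s0)"
    and Y1_dist: "\<And>k. distributed M lborel (\<lambda>\<omega>. Y1 \<omega> $ k) (normal_density ((X1 *v beta1) $ k) s1)"
    and indep: "prob_space.indep_vars M (\<lambda>_. borel)
                  (\<lambda>i \<omega>. case i of Inl k \<Rightarrow> Y0 \<omega> $ k | Inr k \<Rightarrow> Y1 \<omega> $ k) UNIV"
    and scale: "beta0 = (s0 / s1) *\<^sub>R beta1"
    and nz: "beta1 $ j \<noteq> 0"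
    and bias_nz: "bias M (\<lambda>\<omega>. beta_p_hat X1 X0 s1 s0 a0 (Y1 \<omega>) (Y0 \<omega>) $ j) (beta1 $ j) \<noteq> 0"
    and cond:
      "(prob_space.variance M (\<lambda>\<omega>. beta_s_hat X1 X0 s1 s0 a0 (Y1 \<omega>) (Y0 \<omega>) $ j)
        - prob_space.variance M (\<lambda>\<omega>. beta_p_hat X1 X0 s1 s0 a0 (Y1 \<omega>) (Y0 \<omega>) $ j))
       / (percent_bias M (\<lambda>\<omega>. beta_p_hat X1 X0 s1 s0 a0 (Y1 \<omega>) (Y0 \<omega>) $ j) (beta1 $ j))\<^sup>2
       \<le> (beta1 $ j)\<^sup>2"
  shows "mse M (\<lambda>\<omega>. beta_s_hat X1 X0 s1 s0 a0 (Y1 \<omega>) (Y0 \<omega>) $ j) (beta1 $ j)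
         \<le> mse M (\<lambda>\<omega>. beta_p_hat X1 X0 s1 s0 a0 (Y1 \<omega>) (Y0 \<omega>) $ j) (beta1 $ j)"
proof -
  interpret prob_space M by (rule M)
  have int0: "integrable M (\<lambda>\<omega>. Y0 \<omega> $ k)" for k
    by (rule normal_distributed_integrable[OF s0 Y0_dist])
  have int1: "integrable M (\<lambda>\<omega>. Y1 \<omega> $ k)" for k
    by (rule normal_distributed_integrable[OF s1 Y1_dist])
  have "(\<chi> k. expectation (\<lambda>\<omega>. Y0 \<omega> $ k)) = X0 *v ((s0 / s1) *\<^sub>R beta1)"
    and "(\<chi> k. expectation (\<lambda>\<omega>. Y1 \<omega> $ k)) = X1 *v beta1"
    using normal_distributed_expectation[OF s0 Y0_dist] normal_distributed_expectation[OF s1 Y1_dist]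
    by (simp_all add: vec_eq_iff scale)
  then have "expectation (\<lambda>\<omega>. beta_s_hat X1 X0 s1 s0 a0 (Y1 \<omega>) (Y0 \<omega>) $ j) = beta1 $ j"
    using s0 s1 a0(1)
    by (simp add: expectation_beta_s_hat[OF int1 int0] beta_s_hat_at_means[OF rank1])
  then show ?thesis
    using nz bias_nz cond by (rule mse_le_mse_of_unbiased)
qed

end
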